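(* Let $n=2k$ with $k\ge 2$. If $lmd(S_n)=2$, then no local metric basis of $S_n$ has both of its vertices in the same cycle $C_i$, $i\in\{a,b,c,d\}$.
   Context: For $n\ge 3$, $S_n$ is the graph with vertex set $\{a_i,b_i,c_i,d_i : 1\le i\le n\}$ and edge set $\{a_ia_{i+1}, b_ib_{i+1}, c_ic_{i+1}, d_id_{i+1}, a_{i+1}b_i, a_ib_i, b_ic_i, c_id_i : 1\le i\le n\}$, indices taken modulo $n$. For $i\in\{a,b,c,d\}$, $C_i$ is the cycle induced by $i_1,\ldots,i_n$. A vertex $w$ resolves $u,v$ if $d(u,w)\neq d(v,w)$ ($d$ the graph distance). A local resolving set is a vertex set $W$ such that every two adjacent vertices are resolved by some element of $W$; a local metric basis is a local resolving set of minimum cardinality, and $lmd(G)$ is that cardinality. *)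

theory Defs
  imports Main
begin

text \<open>The graph S_n. Vertex (X, i) with X one of the four letters and
  i in {0..<n} stands for X_{i+1}; indices are taken modulo n.\<close>

datatype lbl = LA | LB | LC | LD

type_synonym vertex = "lbl \<times> nat"

definition S_verts :: "nat \<Rightarrow> vertex set" where
  "S_verts n = UNIV \<times> {..<n}"

definition S_edge :: "nat \<Rightarrow> vertex \<Rightarrow> vertex \<Rightarrow> bool" where
  "S_edge n u v \<longleftrightarrow> (\<exists>i<n.
      (\<exists>X. u = (X, i) \<and> v = (X, (i+1) mod n))
    \<or> (u = (LA, (i+1) mod n) \<and> v = (LB, i))
    \<or> (u = (LA, i) \<and> v = (LB, i))
    \<or> (u = (LB, i) \<and> v = (LC, i))
    \<or> (u = (LC, i) \<and> v = (LD, i)))"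

definition S_adj :: "nat \<Rightarrow> vertex \<Rightarrow> vertex \<Rightarrow> bool" where
  "S_adj n u v \<longleftrightarrow> S_edge n u v \<or> S_edge n v u"

inductive walk :: "nat \<Rightarrow> nat \<Rightarrow> vertex \<Rightarrow> vertex \<Rightarrow> bool" for n where
  walk0: "u \<in> S_verts n \<Longrightarrow> walk n 0 u u"
| walkS: "S_adj n u v \<Longrightarrow> walk n k v w \<Longrightarrow> walk n (Suc k) u w"

text \<open>Graph distance (S_n is connected, so this is the length of a shortest path).\<close>
definition S_dist :: "nat \<Rightarrow> vertex \<Rightarrow> vertex \<Rightarrow> nat" where
  "S_dist n u v = (LEAST k. walk n k u v)"

definition resolves :: "nat \<Rightarrow> vertex \<Rightarrow> vertex \<Rightarrow> vertex \<Rightarrow> bool" where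
  "resolves n w u v \<longleftrightarrow> S_dist n u w \<noteq> S_dist n v w"

definition local_resolving :: "nat \<Rightarrow> vertex set \<Rightarrow> bool" where
  "local_resolving n W \<longleftrightarrow> W \<subseteq> S_verts n \<and>
     (\<forall>u\<in>S_verts n. \<forall>v\<in>S_verts n. S_adj n u v \<longrightarrow> (\<exists>w\<in>W. resolves n w u v))"

definition lmd :: "nat \<Rightarrow> nat" where
  "lmd n = (LEAST m. \<exists>W. local_resolving n W \<and> card W = m)"

definition local_metric_basis :: "nat \<Rightarrow> vertex set \<Rightarrow> bool" where
  "local_metric_basis n W \<longleftrightarrow> local_resolving n W \<and> card W = lmd n"

definition cycle_verts :: "nat \<Rightarrow> lbl \<Rightarrow> vertex set" where
  "cycle_verts n X = {X} \<times> {..<n}"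

end

theory Submission
  imports Defs
begin

text \<open>Distances in \<open>S\<^sub>n\<close> are explicit: the distance to a vertex of \<open>C\<^sub>a\<close> or of an inner
  cycle is a potential built from the cyclic distance on \<open>\<int>\<^sub>n\<close>, identified with \<open>S_dist\<close> because
  it is 1-Lipschitz along edges, vanishes only at the target and decreases along some edge at every
  other vertex. For two vertices of one cycle at cyclic offset \<open>1 \<le> m \<le> k\<close> one then exhibits an
  edge equidistant from both: an edge next to one of them when \<open>m < k\<close>, and, when they are
  antipodal, an edge swapped by the reflection of \<open>S\<^sub>n\<close> that fixes both.\<close>

definition cyc_succ :: "nat \<Rightarrow> nat \<Rightarrow> nat" where
  "cyc_succ n i = (if Suc i = n then 0 else Suc i)"

definition cyc_pred :: "nat \<Rightarrow> nat \<Rightarrow> nat" where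
  "cyc_pred n i = (if i = 0 then n - 1 else i - 1)"

text \<open>For \<open>i, j < n\<close> this is \<open>(i - j) mod n\<close>, written so that no truncated subtraction occurs.\<close>
definition cyc_offset :: "nat \<Rightarrow> nat \<Rightarrow> nat \<Rightarrow> nat" where
  "cyc_offset n i j = (if j \<le> i then i - j else i + n - j)"

definition cyc_dist :: "nat \<Rightarrow> nat \<Rightarrow> nat \<Rightarrow> nat" where
  "cyc_dist n i j = min (cyc_offset n i j) (n - cyc_offset n i j)"

lemma cyc_succ_less: "i < n \<Longrightarrow> cyc_succ n i < n"
  by (auto simp: cyc_succ_def)

lemma cyc_pred_less: "i < n \<Longrightarrow> cyc_pred n i < n"
  by (auto simp: cyc_pred_def)

lemma cyc_succ_pred: "i < n \<Longrightarrow> cyc_succ n (cyc_pred n i) = i"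
  by (auto simp: cyc_succ_def cyc_pred_def)

lemma cyc_pred_succ: "i < n \<Longrightarrow> cyc_pred n (cyc_succ n i) = i"
  by (auto simp: cyc_succ_def cyc_pred_def)

lemma Suc_mod_eq_cyc_succ: "i < n \<Longrightarrow> Suc i mod n = cyc_succ n i"
  by (cases "Suc i = n") (simp_all add: cyc_succ_def)

lemma cyc_offset_less: "i < n \<Longrightarrow> j < n \<Longrightarrow> cyc_offset n i j < n"
  by (auto simp: cyc_offset_def)

lemma cyc_offset_self [simp]: "cyc_offset n i i = 0"
  by (simp add: cyc_offset_def)

lemma cyc_offset_eq_0_iff: "i < n \<Longrightarrow> j < n \<Longrightarrow> cyc_offset n i j = 0 \<longleftrightarrow> i = j"
  by (auto simp: cyc_offset_def)

lemma cyc_offset_swap: "i < n \<Longrightarrow> j < n \<Longrightarrow> i \<noteq> j \<Longrightarrow> cyc_offset n j i = n - cyc_offset n i j"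
  by (auto simp: cyc_offset_def)

lemma cyc_offset_succ:
  "i < n \<Longrightarrow> j < n \<Longrightarrow>
    cyc_offset n (cyc_succ n i) j = (if Suc (cyc_offset n i j) = n then 0 else Suc (cyc_offset n i j))"
  by (auto simp: cyc_offset_def cyc_succ_def)

lemma cyc_offset_pred:
  "i < n \<Longrightarrow> j < n \<Longrightarrow>
    cyc_offset n (cyc_pred n i) j = (if cyc_offset n i j = 0 then n - 1 else cyc_offset n i j - 1)"
  by (auto simp: cyc_offset_def cyc_pred_def)

lemma cyc_dist_eq_0_iff: "i < n \<Longrightarrow> j < n \<Longrightarrow> cyc_dist n i j = 0 \<longleftrightarrow> i = j"
  using cyc_offset_less[of i n j] cyc_offset_eq_0_iff[of i n j] by (auto simp: cyc_dist_def)

lemma cyc_dist_succ_lipschitz: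
  assumes "i < n" "j < n"
  shows "cyc_dist n (cyc_succ n i) j \<le> cyc_dist n i j + 1 \<and> cyc_dist n i j \<le> cyc_dist n (cyc_succ n i) j + 1"
  using cyc_offset_less[OF assms] cyc_offset_succ[OF assms]
  by (cases "Suc (cyc_offset n i j) = n") (simp_all add: cyc_dist_def min_def; arith)+

lemma cyc_dist_decreases_at_neighbour:
  assumes "i < n" "j < n" "i \<noteq> j"
  shows "cyc_dist n (cyc_succ n i) j + 1 = cyc_dist n i j \<or> cyc_dist n (cyc_pred n i) j + 1 = cyc_dist n i j"
  using cyc_offset_less[OF assms(1,2)] cyc_offset_succ[OF assms(1,2)] cyc_offset_pred[OF assms(1,2)]
    cyc_offset_eq_0_iff[OF assms(1,2)] assms(3)
  by (cases "Suc (cyc_offset n i j) = n") (simp_all add: cyc_dist_def min_def; arith)+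

lemma S_adj_commute: "S_adj n u v \<longleftrightarrow> S_adj n v u"
  by (auto simp: S_adj_def)

lemma S_adj_in_verts: "S_adj n u v \<Longrightarrow> u \<in> S_verts n \<and> v \<in> S_verts n"
  by (auto simp: S_adj_def S_edge_def S_verts_def)

lemma S_adj_ladder:
  assumes "i < n"
  shows S_adj_cycle: "S_adj n (X, i) (X, cyc_succ n i)"
    and S_adj_A_succ_B: "S_adj n (LA, cyc_succ n i) (LB, i)"
    and S_adj_A_B: "S_adj n (LA, i) (LB, i)"
    and S_adj_B_C: "S_adj n (LB, i) (LC, i)"
    and S_adj_C_D: "S_adj n (LC, i) (LD, i)"
  unfolding S_adj_def S_edge_def using assms Suc_mod_eq_cyc_succ[OF assms] by auto

lemma S_adj_cycle_pred: "i < n \<Longrightarrow> S_adj n (X, i) (X, cyc_pred n i)"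
  using S_adj_cycle[OF cyc_pred_less] cyc_succ_pred S_adj_commute by metis

lemma S_adj_A_B_pred: "i < n \<Longrightarrow> S_adj n (LA, i) (LB, cyc_pred n i)"
  using S_adj_A_succ_B[OF cyc_pred_less] cyc_succ_pred by metis

lemma S_edge_cases:
  assumes "S_edge n u v"
  obtains i X where "i < n" "u = (X, i)" "v = (X, cyc_succ n i)"
  | i where "i < n" "u = (LA, cyc_succ n i)" "v = (LB, i)"
  | i where "i < n" "u = (LA, i)" "v = (LB, i)"
  | i where "i < n" "u = (LB, i)" "v = (LC, i)"
  | i where "i < n" "u = (LC, i)" "v = (LD, i)"
  using assms Suc_mod_eq_cyc_succ unfolding S_edge_def by (metis Suc_eq_plus1)

lemma S_verts_cases:
  assumes "v \<in> S_verts n"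
  obtains X i where "v = (X, i)" "i < n"
  using assms unfolding S_verts_def by auto

lemma walk_length_ge_potential:
  assumes "walk n k v w"
    and lipschitz: "\<And>u v. S_edge n u v \<Longrightarrow> f u \<le> f v + 1 \<and> f v \<le> f u + 1"
  shows "f v \<le> k + f w"
  using assms(1)
proof (induction rule: walk.induct)
  case (walk0 u)
  then show ?case by simp
next
  case (walkS u v k w)
  have "f u \<le> f v + 1" using walkS(1) lipschitz unfolding S_adj_def by blast
  then show ?case using walkS.IH by simp
qed

lemma walk_along_descent:
  assumes zero: "\<And>v. v \<in> S_verts n \<Longrightarrow> f v = 0 \<Longrightarrow> v = w"
    and descent: "\<And>v. v \<in> S_verts n \<Longrightarrow> f v > 0 \<Longrightarrow> \<exists>u. S_adj n v u \<and> f u + 1 = f v"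
  shows "v \<in> S_verts n \<Longrightarrow> walk n (f v) v w"
proof (induction "f v" arbitrary: v)
  case 0
  then show ?case using zero by (metis walk0)
next
  case (Suc m)
  then obtain u where u: "S_adj n v u" "f u + 1 = f v"
    using descent by (metis zero_less_Suc)
  then have "walk n (f u) u w" using Suc S_adj_in_verts by simp
  then show ?case using u by (metis Suc_eq_plus1 walkS)
qed

lemma S_dist_eq_potential:
  assumes w: "w \<in> S_verts n" "f w = 0"
    and lipschitz: "\<And>u v. S_edge n u v \<Longrightarrow> f u \<le> f v + 1 \<and> f v \<le> f u + 1"
    and zero: "\<And>v. v \<in> S_verts n \<Longrightarrow> f v = 0 \<Longrightarrow> v = w"
    and descent: "\<And>v. v \<in> S_verts n \<Longrightarrow> f v > 0 \<Longrightarrow> \<exists>u. S_adj n v u \<and> f u + 1 = f v"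
    and v: "v \<in> S_verts n"
  shows "S_dist n v w = f v"
  unfolding S_dist_def
proof (rule Least_equality)
  show "walk n (f v) v w" using walk_along_descent[OF zero descent v] .
next
  fix k assume "walk n k v w"
  then show "f v \<le> k" using walk_length_ge_potential[OF _ lipschitz] w(2) by fastforce
qed

fun rung :: "lbl \<Rightarrow> nat" where
  "rung LA = 0" | "rung LB = 1" | "rung LC = 2" | "rung LD = 3"

definition rung_dist :: "lbl \<Rightarrow> lbl \<Rightarrow> nat" where
  "rung_dist X Y = (if rung X \<le> rung Y then rung Y - rung X else rung X - rung Y)"

lemma rung_dist_eq_0_iff [simp]: "rung_dist X Y = 0 \<longleftrightarrow> X = Y"
  by (cases X; cases Y) (simp_all add: rung_dist_def)

text \<open>The vertices \<open>b\<^sub>i, c\<^sub>i, d\<^sub>i\<close> reach \<open>C\<^sub>a\<close> through \<open>b\<^sub>i\<close>, whose neighbours on \<open>C\<^sub>a\<close> are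
  \<open>a\<^sub>i\<close> and \<open>a\<^sub>i\<^sub>+\<^sub>1\<close>; dually \<open>a\<^sub>i\<close> reaches the inner cycles through \<open>b\<^sub>i\<close> or \<open>b\<^sub>i\<^sub>-\<^sub>1\<close>.\<close>
definition potential_A :: "nat \<Rightarrow> nat \<Rightarrow> vertex \<Rightarrow> nat" where
  "potential_A n j = (\<lambda>(X, i). if X = LA then cyc_dist n i j
     else rung X + min (cyc_dist n i j) (cyc_dist n (cyc_succ n i) j))"

definition potential_inner :: "nat \<Rightarrow> lbl \<Rightarrow> nat \<Rightarrow> vertex \<Rightarrow> nat" where
  "potential_inner n Y j = (\<lambda>(X, i). if X = LA then rung Y + min (cyc_dist n i j) (cyc_dist n (cyc_pred n i) j)
     else cyc_dist n i j + rung_dist X Y)"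

lemma potential_A_lipschitz:
  assumes "S_edge n u v" "j < n"
  shows "potential_A n j u \<le> potential_A n j v + 1 \<and> potential_A n j v \<le> potential_A n j u + 1"
  using assms(1)
proof (cases rule: S_edge_cases)
  case (1 i X)
  have "cyc_dist n (cyc_succ n i) j \<le> cyc_dist n i j + 1 \<and> cyc_dist n i j \<le> cyc_dist n (cyc_succ n i) j + 1"
    "cyc_dist n (cyc_succ n (cyc_succ n i)) j \<le> cyc_dist n (cyc_succ n i) j + 1 \<and>
     cyc_dist n (cyc_succ n i) j \<le> cyc_dist n (cyc_succ n (cyc_succ n i)) j + 1"
    using cyc_dist_succ_lipschitz 1(1) cyc_succ_less assms(2) by blast+
  then show ?thesis using 1 by (cases X) (simp_all add: potential_A_def min_def)
next
  case (2 i)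
  then show ?thesis using cyc_dist_succ_lipschitz[OF 2(1) assms(2)] by (simp add: potential_A_def min_def)
next
  case (3 i)
  then show ?thesis using cyc_dist_succ_lipschitz[OF 3(1) assms(2)] by (simp add: potential_A_def min_def)
qed (simp_all add: potential_A_def)

lemma potential_inner_lipschitz:
  assumes "S_edge n u v" "j < n" "Y \<noteq> LA"
  shows "potential_inner n Y j u \<le> potential_inner n Y j v + 1 \<and>
    potential_inner n Y j v \<le> potential_inner n Y j u + 1"
  using assms(1)
proof (cases rule: S_edge_cases)
  case (1 i X)
  have "cyc_dist n (cyc_succ n i) j \<le> cyc_dist n i j + 1 \<and> cyc_dist n i j \<le> cyc_dist n (cyc_succ n i) j + 1"
    "cyc_dist n i j \<le> cyc_dist n (cyc_pred n i) j + 1 \<and> cyc_dist n (cyc_pred n i) j \<le> cyc_dist n i j + 1"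
    using cyc_dist_succ_lipschitz[OF 1(1) assms(2)]
      cyc_dist_succ_lipschitz[OF cyc_pred_less[OF 1(1)] assms(2)] cyc_succ_pred[OF 1(1)] by simp_all
  then show ?thesis using 1 by (simp add: potential_inner_def min_def cyc_pred_succ)
next
  case (2 i)
  then show ?thesis using cyc_dist_succ_lipschitz[OF 2(1) assms(2)] assms(3)
    by (cases Y) (simp_all add: potential_inner_def rung_dist_def min_def cyc_pred_succ)
next
  case (3 i)
  then show ?thesis
    using cyc_dist_succ_lipschitz[OF cyc_pred_less[OF 3(1)] assms(2)] cyc_succ_pred[OF 3(1)] assms(3)
    by (cases Y) (simp_all add: potential_inner_def rung_dist_def min_def)
qed (cases Y; simp add: potential_inner_def rung_dist_def)+

lemma cycle_neighbour_closer:
  assumes "i < n" "j < n" "i \<noteq> j"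
  obtains i' where "S_adj n (X, i) (X, i')" "cyc_dist n i' j + 1 = cyc_dist n i j"
  using cyc_dist_decreases_at_neighbour[OF assms] S_adj_cycle[OF assms(1)] S_adj_cycle_pred[OF assms(1)]
  by blast

lemma potential_A_descent:
  assumes j: "j < n" and v: "v \<in> S_verts n" and pos: "potential_A n j v > 0"
  shows "\<exists>u. S_adj n v u \<and> potential_A n j u + 1 = potential_A n j v"
proof -
  obtain X i where vi: "v = (X, i)" "i < n" using v by (rule S_verts_cases)
  show ?thesis
  proof (cases X)
    case LA
    then have "i \<noteq> j" using pos vi cyc_dist_eq_0_iff[OF vi(2) j] by (simp add: potential_A_def)
    then obtain i' where "S_adj n (LA, i) (LA, i')" "cyc_dist n i' j + 1 = cyc_dist n i j"
      using cycle_neighbour_closer[OF vi(2) j] by blast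
    then show ?thesis using vi LA by (intro exI[of _ "(LA, i')"]) (simp add: potential_A_def)
  next
    case LB
    show ?thesis
    proof (cases "cyc_dist n i j \<le> cyc_dist n (cyc_succ n i) j")
      case True
      then show ?thesis using vi LB S_adj_A_B[OF vi(2)] S_adj_commute
        by (intro exI[of _ "(LA, i)"]) (simp add: potential_A_def min_def)
    next
      case False
      then show ?thesis using vi LB S_adj_A_succ_B[OF vi(2)] S_adj_commute
        by (intro exI[of _ "(LA, cyc_succ n i)"]) (simp add: potential_A_def min_def)
    qed
  next
    case LC
    then show ?thesis using vi S_adj_B_C[OF vi(2)] S_adj_commute
      by (intro exI[of _ "(LB, i)"]) (simp add: potential_A_def)
  next
    case LD
    then show ?thesis using vi S_adj_C_D[OF vi(2)] S_adj_commute
      by (intro exI[of _ "(LC, i)"]) (simp add: potential_A_def)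
  qed
qed

lemma potential_inner_descent:
  assumes j: "j < n" and Y: "Y \<noteq> LA" and v: "v \<in> S_verts n" and pos: "potential_inner n Y j v > 0"
  shows "\<exists>u. S_adj n v u \<and> potential_inner n Y j u + 1 = potential_inner n Y j v"
proof -
  obtain X i where vi: "v = (X, i)" "i < n" using v by (rule S_verts_cases)
  have rung_Y: "rung Y \<ge> 1" using Y by (cases Y) simp_all
  consider "X = LA" | "X = Y" | "X \<noteq> LA" "X \<noteq> Y" by blast
  then show ?thesis
  proof cases
    case 1
    show ?thesis
    proof (cases "cyc_dist n i j \<le> cyc_dist n (cyc_pred n i) j")
      case True
      then show ?thesis using vi 1 rung_Y S_adj_A_B[OF vi(2)]
        by (intro exI[of _ "(LB, i)"]) (simp add: potential_inner_def rung_dist_def min_def)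
    next
      case False
      then show ?thesis using vi 1 rung_Y S_adj_A_B_pred[OF vi(2)]
        by (intro exI[of _ "(LB, cyc_pred n i)"]) (simp add: potential_inner_def rung_dist_def min_def)
    qed
  next
    case 2
    then have "i \<noteq> j" using pos vi Y cyc_dist_eq_0_iff[OF vi(2) j] by (simp add: potential_inner_def rung_dist_def)
    then obtain i' where "S_adj n (X, i) (X, i')" "cyc_dist n i' j + 1 = cyc_dist n i j"
      using cycle_neighbour_closer[OF vi(2) j] by blast
    then show ?thesis using vi 2 Y by (intro exI[of _ "(X, i')"]) (simp add: potential_inner_def)
  next
    case 3
    have "S_adj n (LB, i) (LC, i)" "S_adj n (LC, i) (LB, i)" "S_adj n (LC, i) (LD, i)" "S_adj n (LD, i) (LC, i)"
      using S_adj_B_C[OF vi(2)] S_adj_C_D[OF vi(2)] S_adj_commute by blast+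
    then have "\<exists>X'\<in>{LB, LC, LD}. S_adj n (X, i) (X', i) \<and> rung_dist X' Y + 1 = rung_dist X Y"
      using 3 Y by (cases X; cases Y) (simp_all add: rung_dist_def)
    then obtain X' where "X' \<noteq> LA" "S_adj n (X, i) (X', i)" "rung_dist X' Y + 1 = rung_dist X Y"
      by blast
    then show ?thesis using vi 3 by (intro exI[of _ "(X', i)"]) (simp add: potential_inner_def)
  qed
qed

lemma potential_A_eq_0_iff:
  "j < n \<Longrightarrow> v \<in> S_verts n \<Longrightarrow> potential_A n j v = 0 \<longleftrightarrow> v = (LA, j)"
  by (erule S_verts_cases) (auto simp: potential_A_def cyc_dist_eq_0_iff elim: rung.elims)

lemma potential_inner_eq_0_iff:
  "j < n \<Longrightarrow> Y \<noteq> LA \<Longrightarrow> v \<in> S_verts n \<Longrightarrow> potential_inner n Y j v = 0 \<longleftrightarrow> v = (Y, j)"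
  by (erule S_verts_cases) (cases Y; auto simp: potential_inner_def cyc_dist_eq_0_iff)

lemma S_dist_to_A:
  assumes "j < n" "v \<in> S_verts n"
  shows "S_dist n v (LA, j) = potential_A n j v"
  by (rule S_dist_eq_potential)
    (use assms potential_A_lipschitz potential_A_eq_0_iff potential_A_descent in \<open>auto simp: S_verts_def\<close>)

lemma S_dist_to_inner:
  assumes "j < n" "Y \<noteq> LA" "v \<in> S_verts n"
  shows "S_dist n v (Y, j) = potential_inner n Y j v"
  by (rule S_dist_eq_potential)
    (use assms potential_inner_lipschitz potential_inner_eq_0_iff potential_inner_descent in \<open>auto simp: S_verts_def\<close>)

lemma cyc_dist_at_offset:
  assumes n: "n = 2 * k" and k: "k \<ge> 2" and j: "j1 < n" "j2 < n"
    and m: "cyc_offset n j2 j1 = m" "1 \<le> m" "m \<le> k"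
  shows "cyc_dist n j1 j1 = 0" "cyc_dist n j2 j2 = 0"
    "cyc_dist n j2 j1 = m" "cyc_dist n j1 j2 = m"
    "cyc_dist n (cyc_pred n j1) j1 = 1" "cyc_dist n (cyc_succ n j1) j1 = 1"
    "cyc_dist n (cyc_pred n j2) j2 = 1" "cyc_dist n (cyc_succ n j2) j2 = 1"
    "m < k \<Longrightarrow> cyc_dist n (cyc_pred n j1) j2 = m + 1"
    "m < k \<Longrightarrow> cyc_dist n (cyc_succ n j2) j1 = m + 1"
    "m = k \<Longrightarrow> cyc_dist n (cyc_pred n j1) j2 = k - 1"
    "m = k \<Longrightarrow> cyc_dist n (cyc_succ n j1) j2 = k - 1"
    "m = k \<Longrightarrow> cyc_dist n (cyc_pred n j2) j1 = k - 1"
    "m = k \<Longrightarrow> cyc_dist n (cyc_succ n j2) j1 = k - 1"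
  using n k m(2,3) m(1)[symmetric] cyc_offset_eq_0_iff[OF j(2,1)] cyc_offset_swap[OF j(2,1)]
    cyc_offset_succ[OF j(1) j(1)] cyc_offset_pred[OF j(1) j(1)]
    cyc_offset_succ[OF j(2) j(2)] cyc_offset_pred[OF j(2) j(2)]
    cyc_offset_pred[OF j(1) j(2)] cyc_offset_succ[OF j(1) j(2)]
    cyc_offset_pred[OF j(2) j(1)] cyc_offset_succ[OF j(2) j(1)]
  by (simp_all add: cyc_dist_def min_def) arith+

lemma equidistant_edge_A:
  assumes n: "n = 2 * k" and k: "k \<ge> 2" and j: "j1 < n" "j2 < n"
    and m: "cyc_offset n j2 j1 = m" "1 \<le> m" "m \<le> k"
  obtains u v where "S_adj n u v"
    "potential_A n j1 u = potential_A n j1 v" "potential_A n j2 u = potential_A n j2 v"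
proof (cases "m < k")
  case True
  show ?thesis
    using that[OF S_adj_A_succ_B[OF j(2)]] cyc_dist_at_offset[OF assms] True
    by (simp add: potential_A_def)
next
  case False
  then have "m = k" using m(3) by simp
  then show ?thesis
    using that[OF S_adj_cycle[OF cyc_pred_less[OF j(2)], of LB]] cyc_dist_at_offset[OF assms] k
    by (simp add: potential_A_def cyc_succ_pred[OF j(2)])
qed

lemma equidistant_edge_inner:
  assumes n: "n = 2 * k" and k: "k \<ge> 2" and j: "j1 < n" "j2 < n"
    and m: "cyc_offset n j2 j1 = m" "1 \<le> m" "m \<le> k" and Y: "Y \<noteq> LA"
  obtains u v where "S_adj n u v"
    "potential_inner n Y j1 u = potential_inner n Y j1 v" "potential_inner n Y j2 u = potential_inner n Y j2 v"
proof (cases "m < k")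
  case True
  show ?thesis
    using that[OF S_adj_A_B_pred[OF j(1)]] cyc_dist_at_offset[OF n k j m] True Y
    by (cases Y) (simp_all add: potential_inner_def rung_dist_def)
next
  case False
  then have "m = k" using m(3) by simp
  then show ?thesis
    using that[OF S_adj_cycle[OF j(1), of LA]] cyc_dist_at_offset[OF n k j m] k
    by (simp add: potential_inner_def cyc_pred_succ[OF j(1)])
qed

lemma equidistant_edge_at_offset:
  assumes n: "n = 2 * k" and k: "k \<ge> 2" and j: "j1 < n" "j2 < n" "j1 \<noteq> j2"
    and offset: "cyc_offset n j2 j1 \<le> k"
  obtains u v where "S_adj n u v"
    "S_dist n u (X, j1) = S_dist n v (X, j1)" "S_dist n u (X, j2) = S_dist n v (X, j2)"
proof -
  have offset_pos: "1 \<le> cyc_offset n j2 j1" using cyc_offset_eq_0_iff[OF j(2,1)] j(3) by simp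
  show ?thesis
  proof (cases "X = LA")
    case True
    obtain u v where "S_adj n u v"
      "potential_A n j1 u = potential_A n j1 v" "potential_A n j2 u = potential_A n j2 v"
      using equidistant_edge_A[OF n k j(1,2) refl offset_pos offset] .
    then show ?thesis using that True S_dist_to_A j S_adj_in_verts by metis
  next
    case False
    obtain u v where "S_adj n u v" "potential_inner n X j1 u = potential_inner n X j1 v"
      "potential_inner n X j2 u = potential_inner n X j2 v"
      using equidistant_edge_inner[OF n k j(1,2) refl offset_pos offset False] .
    then show ?thesis using that False S_dist_to_inner j S_adj_in_verts by metis
  qed
qed

lemma equidistant_edge_cycle_pair:
  assumes n: "n = 2 * k" and k: "k \<ge> 2" and j: "j1 < n" "j2 < n" "j1 \<noteq> j2"
  obtains u v where "S_adj n u v"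
    "S_dist n u (X, j1) = S_dist n v (X, j1)" "S_dist n u (X, j2) = S_dist n v (X, j2)"
proof -
  have "cyc_offset n j2 j1 \<le> k \<or> cyc_offset n j1 j2 \<le> k"
    using cyc_offset_swap[OF j] cyc_offset_less[OF j(1,2)] n by linarith
  then show ?thesis
    using equidistant_edge_at_offset[OF n k j] equidistant_edge_at_offset[OF n k j(2,1) j(3)[symmetric]] that
    by blast
qed

lemma cycle_pair_not_local_resolving:
  assumes "n = 2 * k" "k \<ge> 2" "W \<subseteq> cycle_verts n X" "card W = 2"
  shows "\<not> local_resolving n W"
proof
  assume resolving: "local_resolving n W"
  obtain j1 j2 where W: "W = {(X, j1), (X, j2)}" "j1 < n" "j2 < n" "j1 \<noteq> j2"
    using assms(3,4) unfolding cycle_verts_def card_2_iff by auto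
  obtain u v where "S_adj n u v"
    "S_dist n u (X, j1) = S_dist n v (X, j1)" "S_dist n u (X, j2) = S_dist n v (X, j2)"
    using equidistant_edge_cycle_pair[OF assms(1,2) W(2-4)] .
  then show False
    using resolving S_adj_in_verts W(1) unfolding local_resolving_def resolves_def by blast
qed

theorem lemma3p3:
  fixes n k :: nat
  assumes "n = 2 * k" and "k \<ge> 2" and "lmd n = 2"
  shows "\<not> (\<exists>W X. local_metric_basis n W \<and> W \<subseteq> cycle_verts n X)"
  using cycle_pair_not_local_resolving[OF assms(1,2)] assms(3)
  unfolding local_metric_basis_def by auto

end
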